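(* Let $W$ be a finite set of possible worlds, let $\Delta$ be a backbone (a sequence $U_1,\dots,U_n$ of subsets of $W$), and let $BA(\Delta)$ be the set of belief algebras on $W$ whose backbone is $\Delta$. Suppose $G_1,G_2\in BA(\Delta)$. Then: (1) $G_1\cap G_2\in BA(\Delta)$; (2) $\operatorname{Gen}(G_1\cup G_2)$ is a belief algebra, and $\operatorname{Gen}(G_1\cup G_2)\in BA(\Delta)$.
   Context: $W$ is a finite nonempty set; $R_W=\{(U,V)\mid U,V\subseteq W,\ U\cap V=\varnothing\}$. A belief algebra on $W$ is a pair $(2^W,\gg)$, $\gg$ a binary relation on $2^W$, such that for all $U,V,U_1,V_1,U_2,V_2\subseteq W$: (A0) $\gg\subseteq R_W$; (A1) $U\gg\varnothing$ iff $U\neq\varnothing$; (A2) $U\gg V$ implies not $V\gg U$; (A3) if $U_1\supseteq U$, $U\gg V$, $V\supseteq V_1$, $U_1\cap V_1=\varnothing$ then $U_1\gg V_1$; (A4) if $U=U_1\cup V_1=U_2\cup V_2$, $U_1\gg V_1$, $U_2\gg V_2$ then $U_1\cap U_2\gg V_1\cup V_2$. Belief algebras are identified with their relations as sets of pairs; $\cap,\cup$ refer to these sets. For $\Omega\subseteq R_W$, $\operatorname{Gen}(\Omega)$ is the smallest subset of $R_W$ that contains $\Omega$, contains $(U,\varnothing)$ for every nonempty $U\subseteq W$, and is closed under: if $(U,V)$ is in it, $U\subseteq U_1$, $V_1\subseteq V$, $U_1\cap V_1=\varnothing$ then $(U_1,V_1)$ is in it; if $U_1\cup V_1=U_2\cup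 V_2$ and $(U_1,V_1),(U_2,V_2)$ are in it then $(U_1\cap U_2,V_1\cup V_2)$ is in it. Every belief algebra $(2^W,\gg)$ has a unique backbone: a sequence $U_1,\dots,U_n$ of nonempty pairwise disjoint sets with union $W$, with $U_i\gg U_{i+1}$ for $i<n$, such that for each $i$ any two disjoint nonempty subsets $V_1,V_2$ of $U_i$ satisfy $(V_1,V_2)\notin\gg$ and $(V_2,V_1)\notin\gg$. *)

theory Defs
  imports Main
begin

definition R_W :: "'a set \<Rightarrow> ('a set \<times> 'a set) set" where
  "R_W W = {(U, V). U \<subseteq> W \<and> V \<subseteq> W \<and> U \<inter> V = {}}"

definition belief_algebra :: "'a set \<Rightarrow> ('a set \<times> 'a set) set \<Rightarrow> bool" where
  "belief_algebra W G \<longleftrightarrow>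
     G \<subseteq> R_W W \<and>
     (\<forall>U. U \<subseteq> W \<longrightarrow> ((U, {}) \<in> G \<longleftrightarrow> U \<noteq> {})) \<and>
     (\<forall>U V. U \<subseteq> W \<longrightarrow> V \<subseteq> W \<longrightarrow> (U, V) \<in> G \<longrightarrow> (V, U) \<notin> G) \<and>
     (\<forall>U V U1 V1. U \<subseteq> W \<longrightarrow> V \<subseteq> W \<longrightarrow> U1 \<subseteq> W \<longrightarrow> V1 \<subseteq> W \<longrightarrow>
        U \<subseteq> U1 \<longrightarrow> (U, V) \<in> G \<longrightarrow> V1 \<subseteq> V \<longrightarrow> U1 \<inter> V1 = {} \<longrightarrow> (U1, V1) \<in> G) \<and>
     (\<forall>U1 V1 U2 V2. U1 \<subseteq> W \<longrightarrow> V1 \<subseteq> W \<longrightarrow> U2 \<subseteq> W \<longrightarrow> V2 \<subseteq> W \<longrightarrow>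
        U1 \<union> V1 = U2 \<union> V2 \<longrightarrow> (U1, V1) \<in> G \<longrightarrow> (U2, V2) \<in> G \<longrightarrow>
        (U1 \<inter> U2, V1 \<union> V2) \<in> G)"

inductive_set Gen :: "'a set \<Rightarrow> ('a set \<times> 'a set) set \<Rightarrow> ('a set \<times> 'a set) set"
  for W :: "'a set" and \<Omega> :: "('a set \<times> 'a set) set" where
  base: "p \<in> \<Omega> \<Longrightarrow> p \<in> R_W W \<Longrightarrow> p \<in> Gen W \<Omega>"
| empty: "U \<subseteq> W \<Longrightarrow> U \<noteq> {} \<Longrightarrow> (U, {}) \<in> Gen W \<Omega>"
| mono: "(U, V) \<in> Gen W \<Omega> \<Longrightarrow> U \<subseteq> U1 \<Longrightarrow> U1 \<subseteq> W \<Longrightarrow> V1 \<subseteq> V \<Longrightarrow>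
         U1 \<inter> V1 = {} \<Longrightarrow> (U1, V1) \<in> Gen W \<Omega>"
| inter: "(U1, V1) \<in> Gen W \<Omega> \<Longrightarrow> (U2, V2) \<in> Gen W \<Omega> \<Longrightarrow> U1 \<union> V1 = U2 \<union> V2 \<Longrightarrow>
         (U1 \<inter> U2, V1 \<union> V2) \<in> Gen W \<Omega>"

definition is_backbone :: "'a set \<Rightarrow> ('a set \<times> 'a set) set \<Rightarrow> 'a set list \<Rightarrow> bool" where
  "is_backbone W G Us \<longleftrightarrow>
     (\<forall>i < length Us. Us ! i \<noteq> {}) \<and>
     (\<forall>i < length Us. \<forall>j < length Us. i \<noteq> j \<longrightarrow> Us ! i \<inter> Us ! j = {}) \<and>
     \<Union> (set Us) = W \<and>
     (\<forall>i. Suc i < length Us \<longrightarrow> (Us ! i, Us ! Suc i) \<in> G) \<and>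
     (\<forall>i < length Us. \<forall>V1 V2. V1 \<subseteq> Us ! i \<longrightarrow> V2 \<subseteq> Us ! i \<longrightarrow> V1 \<noteq> {} \<longrightarrow> V2 \<noteq> {} \<longrightarrow>
        V1 \<inter> V2 = {} \<longrightarrow> (V1, V2) \<notin> G \<and> (V2, V1) \<notin> G)"

definition BA :: "'a set \<Rightarrow> 'a set list \<Rightarrow> ('a set \<times> 'a set) set set" where
  "BA W \<Delta> = {G. belief_algebra W G \<and> is_backbone W G \<Delta>}"

end

theory Submission
  imports Defs
begin

text \<open>Rank every world by the index of its backbone block and let \<open>max_BA W \<Delta>\<close> consist of
  the pairs (U, V) with U nonempty in which every world of V is strictly outranked by some world
  of U. This relation is a belief algebra with backbone \<Delta>, and it contains every belief algebra
  with backbone \<Delta>: each block dominates the union of all later blocks, so a world v of V whose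
  rank is not beaten inside U could be split off from its own block, against the backbone
  condition. Hence Gen(G1 \<union> G2) lies between G1 and \<open>max_BA W \<Delta>\<close>. Below a belief algebra only
  (A3), (A4) and one half of (A1) have to be checked, and above G1 the backbone chain is
  inherited; for G1 \<inter> G2 the same argument works with G1 in place of \<open>max_BA W \<Delta>\<close>.\<close>

lemma belief_algebra_R_W: "belief_algebra W G \<Longrightarrow> G \<subseteq> R_W W"
  unfolding belief_algebra_def by (elim conjE)

lemma belief_algebra_pair_subset:
  assumes "belief_algebra W G" "(U, V) \<in> G"
  shows "U \<subseteq> W" "V \<subseteq> W" "U \<inter> V = {}"
  using belief_algebra_R_W[OF assms(1)] assms(2) unfolding R_W_def by blast+

lemma belief_algebra_empty_right_iff:
  assumes "belief_algebra W G" "U \<subseteq> W" shows "(U, {}) \<in> G \<longleftrightarrow> U \<noteq> {}"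
  using assms(1)[unfolded belief_algebra_def, THEN conjunct2, THEN conjunct1] assms(2) by blast

lemma belief_algebra_asym:
  assumes "belief_algebra W G" "(U, V) \<in> G" shows "(V, U) \<notin> G"
  using assms(1)[unfolded belief_algebra_def, THEN conjunct2, THEN conjunct2, THEN conjunct1]
    assms(2) belief_algebra_pair_subset[OF assms] by blast

lemma belief_algebra_mono:
  assumes G: "belief_algebra W G" and "(U, V) \<in> G" "U \<subseteq> U1" "U1 \<subseteq> W" "V1 \<subseteq> V" "U1 \<inter> V1 = {}"
  shows "(U1, V1) \<in> G"
proof -
  have "U \<subseteq> W" "V \<subseteq> W" using belief_algebra_pair_subset G assms(2) by blast+
  then have "V1 \<subseteq> W" using assms(5) by blast
  with assms \<open>U \<subseteq> W\<close> \<open>V \<subseteq> W\<close> show ?thesis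
    using G[unfolded belief_algebra_def, THEN conjunct2, THEN conjunct2, THEN conjunct2,
        THEN conjunct1, rule_format, of U V U1 V1]
    by blast
qed

lemma belief_algebra_Int_Un:
  assumes G: "belief_algebra W G" and "(U1, V1) \<in> G" "(U2, V2) \<in> G" "U1 \<union> V1 = U2 \<union> V2"
  shows "(U1 \<inter> U2, V1 \<union> V2) \<in> G"
proof -
  have "U1 \<subseteq> W" "V1 \<subseteq> W" "U2 \<subseteq> W" "V2 \<subseteq> W"
    using belief_algebra_pair_subset G assms(2,3) by blast+
  with assms show ?thesis
    using G[unfolded belief_algebra_def, THEN conjunct2, THEN conjunct2, THEN conjunct2,
        THEN conjunct2, rule_format, of U1 V1 U2 V2]
    by blast
qed

lemma belief_algebraI:
  assumes "G \<subseteq> R_W W"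
    and "\<And>U. U \<subseteq> W \<Longrightarrow> (U, {}) \<in> G \<longleftrightarrow> U \<noteq> {}"
    and "\<And>U V. (U, V) \<in> G \<Longrightarrow> (V, U) \<notin> G"
    and "\<And>U V U1 V1. (U, V) \<in> G \<Longrightarrow> U \<subseteq> U1 \<Longrightarrow> U1 \<subseteq> W \<Longrightarrow> V1 \<subseteq> V \<Longrightarrow> U1 \<inter> V1 = {} \<Longrightarrow>
           (U1, V1) \<in> G"
    and "\<And>U1 V1 U2 V2. (U1, V1) \<in> G \<Longrightarrow> (U2, V2) \<in> G \<Longrightarrow> U1 \<union> V1 = U2 \<union> V2 \<Longrightarrow>
           (U1 \<inter> U2, V1 \<union> V2) \<in> G"
  shows "belief_algebra W G"
  unfolding belief_algebra_def by (intro conjI allI impI) (rule assms; assumption)+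

lemma belief_algebra_below:
  assumes "belief_algebra W M" "G \<subseteq> M"
    and "\<And>U. U \<subseteq> W \<Longrightarrow> U \<noteq> {} \<Longrightarrow> (U, {}) \<in> G"
    and "\<And>U V U1 V1. (U, V) \<in> G \<Longrightarrow> U \<subseteq> U1 \<Longrightarrow> U1 \<subseteq> W \<Longrightarrow> V1 \<subseteq> V \<Longrightarrow> U1 \<inter> V1 = {} \<Longrightarrow>
           (U1, V1) \<in> G"
    and "\<And>U1 V1 U2 V2. (U1, V1) \<in> G \<Longrightarrow> (U2, V2) \<in> G \<Longrightarrow> U1 \<union> V1 = U2 \<union> V2 \<Longrightarrow>
           (U1 \<inter> U2, V1 \<union> V2) \<in> G"
  shows "belief_algebra W G"
proof (rule belief_algebraI)
  show "G \<subseteq> R_W W" using assms(1,2) belief_algebra_R_W by blast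
  show "(U, {}) \<in> G \<longleftrightarrow> U \<noteq> {}" if "U \<subseteq> W" for U
    using that assms(1-3) belief_algebra_empty_right_iff by blast
  show "(V, U) \<notin> G" if "(U, V) \<in> G" for U V
    using that assms(1,2) belief_algebra_asym by blast
qed (use assms(4,5) in blast)+

lemma belief_algebra_Int:
  assumes G1: "belief_algebra W G1" and G2: "belief_algebra W G2"
  shows "belief_algebra W (G1 \<inter> G2)"
proof (rule belief_algebra_below[OF G1])
  show "(U, {}) \<in> G1 \<inter> G2" if "U \<subseteq> W" "U \<noteq> {}" for U
    using that belief_algebra_empty_right_iff[OF G1] belief_algebra_empty_right_iff[OF G2] by blast
  show "(U1, V1) \<in> G1 \<inter> G2"
    if "(U, V) \<in> G1 \<inter> G2" "U \<subseteq> U1" "U1 \<subseteq> W" "V1 \<subseteq> V" "U1 \<inter> V1 = {}" for U V U1 V1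
    using that(1) belief_algebra_mono[OF G1 _ that(2-)] belief_algebra_mono[OF G2 _ that(2-)] by blast
  show "(U1 \<inter> U2, V1 \<union> V2) \<in> G1 \<inter> G2"
    if "(U1, V1) \<in> G1 \<inter> G2" "(U2, V2) \<in> G1 \<inter> G2" "U1 \<union> V1 = U2 \<union> V2" for U1 V1 U2 V2
    using that belief_algebra_Int_Un[OF G1] belief_algebra_Int_Un[OF G2] by (meson IntD1 IntD2 IntI)
qed blast

lemma belief_algebra_empty_left:
  assumes G: "belief_algebra W G"
  shows "({}, V) \<notin> G"
proof
  assume V: "({}, V) \<in> G"
  then have "V \<subseteq> W" "V \<noteq> {}"
    using belief_algebra_pair_subset(2)[OF G] belief_algebra_empty_right_iff[OF G, of "{}"] by auto
  then have "(V, {}) \<in> G" using belief_algebra_empty_right_iff[OF G] by blast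
  with V show False using belief_algebra_asym[OF G] by blast
qed

lemma belief_algebra_extend_right:
  assumes G: "belief_algebra W G" and AB: "(A, B) \<in> G" and BH: "(B, H) \<in> G" and "A \<inter> H = {}"
  shows "(A, B \<union> H) \<in> G"
proof -
  have W: "A \<subseteq> W" "B \<subseteq> W" "H \<subseteq> W" and disj: "A \<inter> B = {}" "B \<inter> H = {}"
    using belief_algebra_pair_subset[OF G AB] belief_algebra_pair_subset[OF G BH] by auto
  have "(A \<union> H, B) \<in> G"
    by (rule belief_algebra_mono[OF G AB]) (use W disj \<open>A \<inter> H = {}\<close> in auto)
  moreover have "(A \<union> B, H) \<in> G"
    by (rule belief_algebra_mono[OF G BH]) (use W disj \<open>A \<inter> H = {}\<close> in auto)
  ultimately have "((A \<union> H) \<inter> (A \<union> B), B \<union> H) \<in> G"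
    by (rule belief_algebra_Int_Un[OF G]) blast
  moreover have "(A \<union> H) \<inter> (A \<union> B) = A" using disj(2) by blast
  ultimately show ?thesis by simp
qed

lemma belief_algebra_split_block:
  assumes G: "belief_algebra W G" and BH: "(B, H) \<in> G" and UV: "(U, V) \<in> G"
    and "v \<in> V" "v \<in> B" "U \<subseteq> B \<union> H"
  shows "(B - {v}, {v}) \<in> G \<and> B - {v} \<noteq> {}"
proof -
  have W: "B \<subseteq> W" "H \<subseteq> W" "U \<inter> V = {}"
    using belief_algebra_pair_subset[OF G BH] belief_algebra_pair_subset[OF G UV] by auto
  have "(B \<union> H - {v}, {v}) \<in> G"
    by (rule belief_algebra_mono[OF G UV]) (use assms W in auto)
  then have "(B \<inter> (B \<union> H - {v}), H \<union> {v}) \<in> G"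
    by (rule belief_algebra_Int_Un[OF G BH]) (use \<open>v \<in> B\<close> in blast)
  moreover have "B \<inter> (B \<union> H - {v}) = B - {v}" by blast
  ultimately have split: "(B - {v}, H \<union> {v}) \<in> G" by (simp only:)
  have "(B - {v}, {v}) \<in> G"
    by (rule belief_algebra_mono[OF G split]) (use W in auto)
  moreover have "B - {v} \<noteq> {}" using split belief_algebra_empty_left[OF G] by metis
  ultimately show ?thesis ..
qed

locale ordered_partition =
  fixes W :: "'a set" and D :: "'a set list"
  assumes block_nonempty: "i < length D \<Longrightarrow> D ! i \<noteq> {}"
    and blocks_disjoint: "i < length D \<Longrightarrow> j < length D \<Longrightarrow> i \<noteq> j \<Longrightarrow> D ! i \<inter> D ! j = {}"
    and blocks_cover: "\<Union> (set D) = W"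

lemma is_backbone_ordered_partition: "is_backbone W G D \<Longrightarrow> ordered_partition W D"
  unfolding is_backbone_def ordered_partition_def by (elim conjE) simp

lemma is_backbone_chain: "is_backbone W G D \<Longrightarrow> Suc i < length D \<Longrightarrow> (D ! i, D ! Suc i) \<in> G"
  unfolding is_backbone_def by (elim conjE) simp

lemma is_backbone_block:
  "is_backbone W G D \<Longrightarrow> i < length D \<Longrightarrow> V1 \<subseteq> D ! i \<Longrightarrow> V2 \<subseteq> D ! i \<Longrightarrow>
   V1 \<noteq> {} \<Longrightarrow> V2 \<noteq> {} \<Longrightarrow> V1 \<inter> V2 = {} \<Longrightarrow> (V1, V2) \<notin> G"
  unfolding is_backbone_def by (elim conjE) simp

lemma is_backbone_below:
  assumes "is_backbone W M D" "G \<subseteq> M" "\<And>i. Suc i < length D \<Longrightarrow> (D ! i, D ! Suc i) \<in> G"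
  shows "is_backbone W G D"
  using assms unfolding is_backbone_def by (elim conjE) (intro conjI; blast)

lemma is_backbone_Int:
  "is_backbone W G1 D \<Longrightarrow> is_backbone W G2 D \<Longrightarrow> is_backbone W (G1 \<inter> G2) D"
  by (rule is_backbone_below[of W G1]) (auto intro: is_backbone_chain)

definition rank :: "'a set list \<Rightarrow> 'a \<Rightarrow> nat" where
  "rank D x = (LEAST i. i < length D \<and> x \<in> D ! i)"

definition max_BA :: "'a set \<Rightarrow> 'a set list \<Rightarrow> ('a set \<times> 'a set) set" where
  "max_BA W D = {(U, V). (U, V) \<in> R_W W \<and> U \<noteq> {} \<and> (\<forall>v\<in>V. \<exists>u\<in>U. rank D u < rank D v)}"

lemma mem_max_BA_iff:
  "(U, V) \<in> max_BA W D \<longleftrightarrow>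
     U \<subseteq> W \<and> V \<subseteq> W \<and> U \<inter> V = {} \<and> U \<noteq> {} \<and> (\<forall>v\<in>V. \<exists>u\<in>U. rank D u < rank D v)"
  by (simp add: max_BA_def R_W_def)

lemma obtain_min_rank:
  assumes "S \<noteq> {}"
  obtains w where "w \<in> S" "\<forall>y\<in>S. rank D w \<le> rank D y"
  using ex_has_least_nat[of "\<lambda>y. y \<in> S" _ "rank D"] assms by blast

lemma max_BA_min_rank_left:
  assumes "(U, V) \<in> max_BA W D" "w \<in> U \<union> V" "\<forall>y \<in> U \<union> V. rank D w \<le> rank D y"
  shows "w \<in> U"
  using assms unfolding mem_max_BA_iff by (meson UnE UnI1 not_le)

lemma belief_algebra_max_BA: "belief_algebra W (max_BA W D)"
proof (rule belief_algebraI)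
  show "max_BA W D \<subseteq> R_W W" unfolding max_BA_def by blast
  show "(U, {}) \<in> max_BA W D \<longleftrightarrow> U \<noteq> {}" if "U \<subseteq> W" for U
    using that unfolding mem_max_BA_iff by blast
next
  fix U V assume UV: "(U, V) \<in> max_BA W D"
  show "(V, U) \<notin> max_BA W D"
  proof
    assume VU: "(V, U) \<in> max_BA W D"
    have "U \<union> V \<noteq> {}" using UV by (simp add: mem_max_BA_iff)
    then obtain w where w: "w \<in> U \<union> V" "\<forall>y \<in> U \<union> V. rank D w \<le> rank D y"
      by (rule obtain_min_rank)
    have "w \<in> U" using max_BA_min_rank_left[OF UV w] .
    moreover have "w \<in> V" using max_BA_min_rank_left[OF VU] w by (simp add: sup_commute)
    ultimately show False using UV by (auto simp: mem_max_BA_iff)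
  qed
next
  fix U V U1 V1 assume "(U, V) \<in> max_BA W D" "U \<subseteq> U1" "U1 \<subseteq> W" "V1 \<subseteq> V" "U1 \<inter> V1 = {}"
  then show "(U1, V1) \<in> max_BA W D" unfolding mem_max_BA_iff by blast
next
  fix U1 V1 U2 V2
  assume 1: "(U1, V1) \<in> max_BA W D" and 2: "(U2, V2) \<in> max_BA W D" and eq: "U1 \<union> V1 = U2 \<union> V2"
  have "U1 \<union> V1 \<noteq> {}" using 1 by (simp add: mem_max_BA_iff)
  then obtain w where w: "w \<in> U1 \<union> V1" "\<forall>y \<in> U1 \<union> V1. rank D w \<le> rank D y"
    by (rule obtain_min_rank)
  then have "w \<in> U1" "w \<in> U2"
    using max_BA_min_rank_left[OF 1] max_BA_min_rank_left[OF 2] eq by simp_all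
  moreover have "rank D w < rank D v" if "v \<in> V1 \<union> V2" for v
  proof -
    have "\<exists>u \<in> U1 \<union> U2. rank D u < rank D v"
      using that 1 2 by (auto simp: mem_max_BA_iff)
    then obtain u where "u \<in> U1 \<union> V1" "rank D u < rank D v" using eq by blast
    with w show ?thesis by (meson le_less_trans)
  qed
  ultimately show "(U1 \<inter> U2, V1 \<union> V2) \<in> max_BA W D"
    using 1 2 by (auto simp: mem_max_BA_iff)
qed

context ordered_partition
begin

lemma rank_eq: "i < length D \<Longrightarrow> x \<in> D ! i \<Longrightarrow> rank D x = i"
  unfolding rank_def by (rule Least_equality) (use blocks_disjoint in \<open>auto simp: linorder_not_le\<close>)

lemma rank_less_length: "x \<in> W \<Longrightarrow> rank D x < length D"
  and in_block_rank: "x \<in> W \<Longrightarrow> x \<in> D ! rank D x"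
  using blocks_cover rank_eq by (auto simp: in_set_conv_nth)

lemma block_subset: "i < length D \<Longrightarrow> D ! i \<subseteq> W"
  using blocks_cover nth_mem by blast

lemma block_eq: "i < length D \<Longrightarrow> D ! i = {x \<in> W. rank D x = i}"
  using block_subset rank_eq in_block_rank by blast

lemma is_backbone_max_BA: "is_backbone W (max_BA W D) D"
proof -
  have chain: "(D ! i, D ! Suc i) \<in> max_BA W D" if i: "Suc i < length D" for i
  proof -
    obtain u where "u \<in> D ! i" using block_nonempty[of i] i by (meson Suc_lessD ex_in_conv)
    then show ?thesis
      using i blocks_disjoint[of i "Suc i"] block_subset[of i] block_subset[of "Suc i"]
        rank_eq[of i] rank_eq[of "Suc i"]
      by (auto simp: mem_max_BA_iff)
  qed
  have inner: "(V1, V2) \<notin> max_BA W D"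
    if V: "i < length D" "V1 \<subseteq> D ! i" "V2 \<subseteq> D ! i" "V2 \<noteq> {}" for i V1 V2
  proof
    assume "(V1, V2) \<in> max_BA W D"
    moreover obtain v where "v \<in> V2" using V(4) by blast
    ultimately have "\<exists>u\<in>V1. rank D u < rank D v" by (simp add: mem_max_BA_iff)
    with \<open>v \<in> V2\<close> V(1-3) show False using rank_eq by (metis less_irrefl subsetD)
  qed
  show ?thesis
    unfolding is_backbone_def
    by (intro conjI allI impI) (simp_all add: block_nonempty blocks_disjoint blocks_cover chain inner)
qed

lemma block_dominates_later:
  assumes G: "belief_algebra W G" "is_backbone W G D" and "i < length D"
  shows "(D ! i, {x \<in> W. i < rank D x}) \<in> G"
proof -
  have "i \<le> length D - 1" using assms(3) by simp
  then show ?thesis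
  proof (induction rule: inc_induct)
    case base
    have last: "length D - 1 < length D" using assms(3) by simp
    have "{x \<in> W. length D - 1 < rank D x} = {}" using rank_less_length by fastforce
    moreover have "(D ! (length D - 1), {}) \<in> G"
      using belief_algebra_empty_right_iff[OF G(1) block_subset[OF last]] block_nonempty[OF last]
      by simp
    ultimately show ?case by (simp only:)
  next
    case (step n)
    then have n: "Suc n < length D" by simp
    have "D ! n \<inter> {x \<in> W. Suc n < rank D x} = {}"
      using block_eq[of n] n by auto
    then have "(D ! n, D ! Suc n \<union> {x \<in> W. Suc n < rank D x}) \<in> G"
      by (rule belief_algebra_extend_right[OF G(1) is_backbone_chain[OF G(2) n] step.IH])
    moreover have "D ! Suc n \<union> {x \<in> W. Suc n < rank D x} = {x \<in> W. n < rank D x}"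
      unfolding block_eq[OF n] by auto
    ultimately show ?case by (simp only:)
  qed
qed

lemma backbone_subset_max_BA:
  assumes G: "belief_algebra W G" "is_backbone W G D"
  shows "G \<subseteq> max_BA W D"
proof safe
  fix U V assume UV: "(U, V) \<in> G"
  have W: "U \<subseteq> W" "V \<subseteq> W" "U \<inter> V = {}" using belief_algebra_pair_subset[OF G(1) UV] by auto
  have "U \<noteq> {}" using UV belief_algebra_empty_left[OF G(1)] by metis
  moreover have "\<exists>u\<in>U. rank D u < rank D v" if v: "v \<in> V" for v
  proof (rule ccontr)
    assume "\<not> ?thesis"
    then have U_rank: "\<forall>u\<in>U. rank D v \<le> rank D u" by (simp add: not_less)
    define i where "i = rank D v"
    have "v \<in> W" using v W(2) by blast
    then have i: "i < length D" "v \<in> D ! i"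
      using rank_less_length in_block_rank unfolding i_def by blast+
    have "U \<subseteq> D ! i \<union> {x \<in> W. i < rank D x}"
    proof
      fix u assume "u \<in> U"
      then have "u \<in> W" "i \<le> rank D u" using U_rank W(1) unfolding i_def by auto
      then show "u \<in> D ! i \<union> {x \<in> W. i < rank D x}" unfolding block_eq[OF i(1)] by auto
    qed
    note split = belief_algebra_split_block[OF G(1) block_dominates_later[OF G i(1)] UV v i(2) this]
    have "(D ! i - {v}, {v}) \<notin> G"
      by (rule is_backbone_block[OF G(2) i(1)]) (use i(2) split in auto)
    with split show False by blast
  qed
  ultimately show "(U, V) \<in> max_BA W D" using W by (simp add: mem_max_BA_iff)
qed

end

lemma Gen_least:
  assumes M: "belief_algebra W M" and "\<Omega> \<subseteq> M"
  shows "Gen W \<Omega> \<subseteq> M"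
proof
  fix p assume "p \<in> Gen W \<Omega>"
  then show "p \<in> M"
  proof induction
    case (base p)
    then show ?case using assms(2) by blast
  next
    case (empty U)
    then show ?case using belief_algebra_empty_right_iff[OF M] by blast
  next
    case (mono U V U1 V1)
    then show ?case using belief_algebra_mono[OF M] by blast
  next
    case (inter U1 V1 U2 V2)
    then show ?case using belief_algebra_Int_Un[OF M] by blast
  qed
qed

lemma belief_algebra_Gen:
  assumes "belief_algebra W M" "\<Omega> \<subseteq> M"
  shows "belief_algebra W (Gen W \<Omega>)"
  by (rule belief_algebra_below[OF assms(1) Gen_least[OF assms] Gen.empty Gen.mono Gen.inter])

text \<open>Finiteness and nonemptiness of W are not needed: ranks are indices into the list \<Delta>.\<close>

theorem theorem2:
  fixes W :: "'a set" and \<Delta> :: "'a set list" and G1 G2 :: "('a set \<times> 'a set) set"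
  assumes "finite W" and "W \<noteq> {}"
    and "G1 \<in> BA W \<Delta>" and "G2 \<in> BA W \<Delta>"
  shows "G1 \<inter> G2 \<in> BA W \<Delta> \<and>
         (belief_algebra W (Gen W (G1 \<union> G2)) \<and> Gen W (G1 \<union> G2) \<in> BA W \<Delta>)"
proof -
  have G1: "belief_algebra W G1" "is_backbone W G1 \<Delta>"
    and G2: "belief_algebra W G2" "is_backbone W G2 \<Delta>"
    using assms(3,4) unfolding BA_def by simp_all
  interpret ordered_partition W \<Delta> by (rule is_backbone_ordered_partition[OF G1(2)])
  have below_max: "G1 \<union> G2 \<subseteq> max_BA W \<Delta>"
    using backbone_subset_max_BA G1 G2 by blast
  have Gen_BA: "belief_algebra W (Gen W (G1 \<union> G2))"
    by (rule belief_algebra_Gen[OF belief_algebra_max_BA below_max])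
  have "G1 \<subseteq> Gen W (G1 \<union> G2)"
    using belief_algebra_R_W[OF G1(1)] by (auto intro: Gen.base)
  then have "is_backbone W (Gen W (G1 \<union> G2)) \<Delta>"
    using is_backbone_below[OF is_backbone_max_BA Gen_least[OF belief_algebra_max_BA below_max]]
      is_backbone_chain[OF G1(2)] by blast
  with Gen_BA show ?thesis
    using belief_algebra_Int[OF G1(1) G2(1)] is_backbone_Int[OF G1(2) G2(2)]
    by (simp add: BA_def)
qed

end
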